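(* Let $c=\cos\gamma$, $s=\sin\gamma$ with $\gamma\in(0,2\pi)$, $\gamma\ne\pi/2,\pi,3\pi/2$. Suppose the initial coin state $\nu_0|0\rangle_C+\nu_1|1\rangle_C$ of the generalized alternate quantum walk satisfies \begin{equation*} |\nu_0|^2=|\nu_1|^2,\qquad \nu_0\nu_1^*+\nu_0^*\nu_1=0, \end{equation*} and the initial coin state $q_0|0\rangle_{C'}+q_1|1\rangle_{C'}+q_2|2\rangle_{C'}+q_3|3\rangle_{C'}$ of the generalized Grover walk satisfies \begin{equation*} q_0=q_3=(-1)^\xi\frac{|cs|}{\sqrt{2}\,s},\qquad q_1=q_2=-(-1)^\xi\frac{s}{\sqrt{2}}, \end{equation*} with $\xi\in\{0,1\}$, and the walker starts at the origin $(0,0)$ in both walks. Then the generalized alternate quantum walk and the generalized Grover walk have the same spatial probability distribution (probability of the walker being at $(x,y)$, obtained by tracing out the coin) at every time $t$.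
   Context: Walker space is spanned by $\{|x,y\rangle\}$, $x,y\in\mathbb{Z}$. Generalized Grover walk: four-dimensional coin with basis $|0\rangle_{C'},|1\rangle_{C'},|2\rangle_{C'},|3\rangle_{C'}$ corresponding to moves left-down, left-up, right-down, right-up, i.e. $(x,y)\to(x-1,y-1),(x-1,y+1),(x+1,y-1),(x+1,y+1)$; one time step consists of applying the coin operation \begin{equation*} \hat{A}=\begin{pmatrix} -c^2&|cs|&|cs|&s^2\\ |cs|&-s^2&c^2&|cs|\\ |cs|&c^2&-s^2&|cs|\\ s^2&|cs|&|cs|&-c^2 \end{pmatrix} \end{equation*} followed by the conditional move. Generalized alternate quantum walk: two-dimensional coin with basis $|0\rangle_C,|1\rangle_C$, coin operation $\hat{U}=\begin{pmatrix}c&s\\ s&-c\end{pmatrix}$, and conditional shifts $\hat{S}_x=\sum_{i,j}|i-1,j,0\rangle\langle i,j,0|+\sum_{i,j}|i+1,j,1\rangle\langle i,j,1|$ and $\hat{S}_y=\sum_{i,j}|i,j-1,0\rangle\langle i,j,0|+\sum_{i,j}|i,j+1,1\rangle\langle i,j,1|$; one time step consists of $\hat{U}$, then $\hat{S}_x$, then $\hat{U}$, then $\hat{S}_y$. For $\gamma=\pi/4$ these reduce (up to conventions) to the Hadamard coin and the standard Grover coin. *)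

theory Defs
  imports "HOL-Analysis.Analysis"
begin

text \<open>Wave functions: position (x,y) in Z^2 and coin index (nat; only indices
  below the coin dimension are used) to complex amplitudes.\<close>
type_synonym wavefn = "int \<Rightarrow> int \<Rightarrow> nat \<Rightarrow> complex"

definition grover_coin :: "real \<Rightarrow> nat \<Rightarrow> nat \<Rightarrow> real" where
  "grover_coin \<gamma> i j =
    (let c = cos \<gamma>; s = sin \<gamma>; a = \<bar>c * s\<bar> in
     [[-(c^2), a, a, s^2],
      [a, -(s^2), c^2, a],
      [a, c^2, -(s^2), a],
      [s^2, a, a, -(c^2)]] ! i ! j)"

definition dx4 :: "nat \<Rightarrow> int" where "dx4 i = (if i < 2 then -1 else 1)"
definition dy4 :: "nat \<Rightarrow> int" where "dy4 i = (if even i then -1 else 1)"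

definition grover_step :: "real \<Rightarrow> wavefn \<Rightarrow> wavefn" where
  "grover_step \<gamma> \<psi> x y i =
     (if i < 4 then
        (\<Sum>k<4. complex_of_real (grover_coin \<gamma> i k) * \<psi> (x - dx4 i) (y - dy4 i) k)
      else 0)"

definition alt_coin :: "real \<Rightarrow> nat \<Rightarrow> nat \<Rightarrow> real" where
  "alt_coin \<gamma> i j = [[cos \<gamma>, sin \<gamma>], [sin \<gamma>, - cos \<gamma>]] ! i ! j"

definition apply_alt_coin :: "real \<Rightarrow> wavefn \<Rightarrow> wavefn" where
  "apply_alt_coin \<gamma> \<psi> x y i =
     (if i < 2 then (\<Sum>k<2. complex_of_real (alt_coin \<gamma> i k) * \<psi> x y k) else 0)"

text \<open>S_x: coin 0 moves x to x-1, coin 1 moves x to x+1; S_y analogously.\<close>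
definition shift_x :: "wavefn \<Rightarrow> wavefn" where
  "shift_x \<psi> x y i = (if i = 0 then \<psi> (x + 1) y 0 else if i = 1 then \<psi> (x - 1) y 1 else 0)"

definition shift_y :: "wavefn \<Rightarrow> wavefn" where
  "shift_y \<psi> x y i = (if i = 0 then \<psi> x (y + 1) 0 else if i = 1 then \<psi> x (y - 1) 1 else 0)"

definition alt_step :: "real \<Rightarrow> wavefn \<Rightarrow> wavefn" where
  "alt_step \<gamma> \<psi> = shift_y (apply_alt_coin \<gamma> (shift_x (apply_alt_coin \<gamma> \<psi>)))"

definition grover_walk :: "real \<Rightarrow> wavefn \<Rightarrow> nat \<Rightarrow> wavefn" where
  "grover_walk \<gamma> \<psi>0 t = (grover_step \<gamma> ^^ t) \<psi>0"

definition alt_walk :: "real \<Rightarrow> wavefn \<Rightarrow> nat \<Rightarrow> wavefn" where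
  "alt_walk \<gamma> \<psi>0 t = (alt_step \<gamma> ^^ t) \<psi>0"

definition at_origin :: "(nat \<Rightarrow> complex) \<Rightarrow> wavefn" where
  "at_origin q x y k = (if x = 0 \<and> y = 0 then q k else 0)"

definition prob_at :: "nat \<Rightarrow> wavefn \<Rightarrow> int \<Rightarrow> int \<Rightarrow> real" where
  "prob_at d \<psi> x y = (\<Sum>k<d. (cmod (\<psi> x y k))^2)"

end

theory Submission
  imports Defs
begin

(* By linearity, the alternate walk started from nu0 |0> + nu1 |1> is nu0 u_t + nu1 v_t, where
   u_t and v_t are the walks started from |0> and |1> at the origin.  The step operator T of the
   alternate walk satisfies the Cayley-Hamilton relation T^2 = tau T - 1 with a coin-independent
   translation operator tau, so (u_t, v_t) remains the pair of columns of an operator f + h T with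
   real kernels f and h.  For such pairs, one Grover step acts as -T once every amplitude pair
   (u_t, v_t) at coin k is reflected by the coin U into two Grover coins, and the Grover initial
   state q is +-1/sqrt 2 times this mixture of (u_0, v_0).  Because U is orthogonal, the Grover
   distribution is half the sum of the distributions of u_t and v_t.  Because u_t and v_t are real,
   the hypotheses on nu give the same value for the alternate walk. *)

(* Coin 1 is written Suc 0: One_nat_def is a simp rule, so 1 :: nat does not survive
   simplification. *)
lemma alt_step_coins:
  "alt_step \<gamma> \<psi> x y 0 =
       of_real (cos \<gamma>) * (of_real (cos \<gamma>) * \<psi> (x+1) (y+1) 0
                         + of_real (sin \<gamma>) * \<psi> (x+1) (y+1) (Suc 0))
     + of_real (sin \<gamma>) * (of_real (sin \<gamma>) * \<psi> (x-1) (y+1) 0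
                         - of_real (cos \<gamma>) * \<psi> (x-1) (y+1) (Suc 0))"
  "alt_step \<gamma> \<psi> x y (Suc 0) =
       of_real (sin \<gamma>) * (of_real (cos \<gamma>) * \<psi> (x+1) (y-1) 0
                         + of_real (sin \<gamma>) * \<psi> (x+1) (y-1) (Suc 0))
     - of_real (cos \<gamma>) * (of_real (sin \<gamma>) * \<psi> (x-1) (y-1) 0
                         - of_real (cos \<gamma>) * \<psi> (x-1) (y-1) (Suc 0))"
  "2 \<le> k \<Longrightarrow> alt_step \<gamma> \<psi> x y k = 0"
  by (simp_all add: alt_step_def shift_y_def shift_x_def apply_alt_coin_def alt_coin_def
      lessThan_nat_numeral)

lemma grover_step_coins:
  "grover_step \<gamma> \<psi> x y 0 = of_real (-(cos \<gamma>^2)) * \<psi> (x+1) (y+1) 0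
     + of_real \<bar>cos \<gamma> * sin \<gamma>\<bar> * \<psi> (x+1) (y+1) (Suc 0) + of_real \<bar>cos \<gamma> * sin \<gamma>\<bar> * \<psi> (x+1) (y+1) 2
     + of_real (sin \<gamma>^2) * \<psi> (x+1) (y+1) 3"
  "grover_step \<gamma> \<psi> x y (Suc 0) = of_real \<bar>cos \<gamma> * sin \<gamma>\<bar> * \<psi> (x+1) (y-1) 0
     + of_real (-(sin \<gamma>^2)) * \<psi> (x+1) (y-1) (Suc 0) + of_real (cos \<gamma>^2) * \<psi> (x+1) (y-1) 2
     + of_real \<bar>cos \<gamma> * sin \<gamma>\<bar> * \<psi> (x+1) (y-1) 3"
  "grover_step \<gamma> \<psi> x y 2 = of_real \<bar>cos \<gamma> * sin \<gamma>\<bar> * \<psi> (x-1) (y+1) 0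
     + of_real (cos \<gamma>^2) * \<psi> (x-1) (y+1) (Suc 0) + of_real (-(sin \<gamma>^2)) * \<psi> (x-1) (y+1) 2
     + of_real \<bar>cos \<gamma> * sin \<gamma>\<bar> * \<psi> (x-1) (y+1) 3"
  "grover_step \<gamma> \<psi> x y 3 = of_real (sin \<gamma>^2) * \<psi> (x-1) (y-1) 0
     + of_real \<bar>cos \<gamma> * sin \<gamma>\<bar> * \<psi> (x-1) (y-1) (Suc 0) + of_real \<bar>cos \<gamma> * sin \<gamma>\<bar> * \<psi> (x-1) (y-1) 2
     + of_real (-(cos \<gamma>^2)) * \<psi> (x-1) (y-1) 3"
  "4 \<le> i \<Longrightarrow> grover_step \<gamma> \<psi> x y i = 0"
  by (simp_all add: grover_step_def grover_coin_def dx4_def dy4_def Let_def lessThan_nat_numeral)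

lemma of_real_cos_sin_squared_add:
  "(of_real (cos \<gamma>) :: 'a::real_algebra_1)^2 + of_real (sin \<gamma>)^2 = 1"
  by (metis of_real_add of_real_power of_real_1 sin_cos_squared_add add.commute)

lemma alt_step_linear:
  "alt_step \<gamma> (\<lambda>x y k. a * \<phi> x y k + b * \<psi> x y k) x y k
     = a * alt_step \<gamma> \<phi> x y k + b * alt_step \<gamma> \<psi> x y k"
proof -
  consider "k = 0" | "k = Suc 0" | "2 \<le> k" by linarith
  then show ?thesis by cases (simp_all add: alt_step_coins algebra_simps)
qed

lemma alt_step_cong:
  assumes "\<forall>x y k. k < 2 \<longrightarrow> \<phi> x y k = \<psi> x y k"
  shows "alt_step \<gamma> \<phi> x y k = alt_step \<gamma> \<psi> x y k"
proof -
  consider "k = 0" | "k = Suc 0" | "2 \<le> k" by linarith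
  then show ?thesis by cases (simp_all add: alt_step_coins assms)
qed

lemma alt_step_real:
  assumes "\<forall>x y k. \<psi> x y k \<in> \<real>"
  shows "alt_step \<gamma> \<psi> x y k \<in> \<real>"
proof -
  consider "k = 0" | "k = Suc 0" | "2 \<le> k" by linarith
  then show ?thesis by cases (simp_all add: alt_step_coins assms)
qed

lemma alt_walk_superposition:
  assumes "\<forall>x y k. k < 2 \<longrightarrow> \<psi> x y k = a * \<phi>0 x y k + b * \<phi>1 x y k"
  shows "k < 2 \<Longrightarrow> alt_walk \<gamma> \<psi> t x y k = a * alt_walk \<gamma> \<phi>0 t x y k + b * alt_walk \<gamma> \<phi>1 t x y k"
proof (induction t arbitrary: x y k)
  case 0
  then show ?case using assms by (simp add: alt_walk_def)
next
  case (Suc t)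
  have "alt_step \<gamma> (alt_walk \<gamma> \<psi> t) x y k
      = alt_step \<gamma> (\<lambda>x y k. a * alt_walk \<gamma> \<phi>0 t x y k + b * alt_walk \<gamma> \<phi>1 t x y k) x y k"
    using Suc.IH by (intro alt_step_cong) simp
  then show ?case by (simp add: alt_walk_def alt_step_linear)
qed

definition in_coin :: "nat \<Rightarrow> (int \<Rightarrow> int \<Rightarrow> complex) \<Rightarrow> wavefn" where
  "in_coin j f x y k = (if k = j then f x y else 0)"

definition trace_shift :: "real \<Rightarrow> (int \<Rightarrow> int \<Rightarrow> complex) \<Rightarrow> int \<Rightarrow> int \<Rightarrow> complex" where
  "trace_shift \<gamma> f x y =
     of_real (cos \<gamma>^2) * f (x+1) (y+1) + of_real (sin \<gamma>^2) * f (x-1) (y+1)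
   + of_real (sin \<gamma>^2) * f (x+1) (y-1) + of_real (cos \<gamma>^2) * f (x-1) (y-1)"

(* The symbol of alt_step is a 2x2 matrix of translations with determinant 1 (each coin
   reflection has determinant -1) and trace trace_shift. *)
lemma alt_step_cayley_hamilton:
  assumes "k < 2"
  shows "alt_step \<gamma> (alt_step \<gamma> \<psi>) x y k
    = alt_step \<gamma> (\<lambda>x y k. trace_shift \<gamma> (\<lambda>x y. \<psi> x y k) x y) x y k - \<psi> x y k"
proof -
  note pyth = of_real_cos_sin_squared_add[of \<gamma>, where 'a = complex]
  from assms consider "k = 0" | "k = Suc 0" by linarith
  then show ?thesis
  proof cases
    case 1
    show ?thesis
      by (simp add: 1 alt_step_coins trace_shift_def) (use pyth in algebra)
  next
    case 2
    show ?thesis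
      by (simp add: 2 alt_step_coins trace_shift_def) (use pyth in algebra)
  qed
qed

(* Column j of the operator f + h T, where the scalar fields f and h act by convolution and T
   is alt_step (which commutes with translations). *)
definition alt_pencil ::
    "real \<Rightarrow> (int \<Rightarrow> int \<Rightarrow> complex) \<Rightarrow> (int \<Rightarrow> int \<Rightarrow> complex) \<Rightarrow> nat \<Rightarrow> wavefn" where
  "alt_pencil \<gamma> f h j = (\<lambda>x y k. in_coin j f x y k + alt_step \<gamma> (in_coin j h) x y k)"

lemma alt_step_alt_pencil:
  assumes "j < 2"
  shows "alt_step \<gamma> (alt_pencil \<gamma> f h j)
    = alt_pencil \<gamma> (\<lambda>x y. - h x y) (\<lambda>x y. f x y + trace_shift \<gamma> h x y) j"
proof (intro ext)
  fix x y and k :: nat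
  have trace_in_coin:
    "(\<lambda>x y k. trace_shift \<gamma> (\<lambda>x y. in_coin j h x y k) x y) = in_coin j (trace_shift \<gamma> h)"
    by (intro ext) (simp add: in_coin_def trace_shift_def)
  have "alt_step \<gamma> (alt_pencil \<gamma> f h j) x y k
      = alt_step \<gamma> (in_coin j f) x y k + alt_step \<gamma> (alt_step \<gamma> (in_coin j h)) x y k"
    using alt_step_linear[of \<gamma> 1 _ 1] by (simp add: alt_pencil_def)
  also have "\<dots> = alt_step \<gamma> (in_coin j f) x y k + alt_step \<gamma> (in_coin j (trace_shift \<gamma> h)) x y k
      - in_coin j h x y k"
  proof (cases "k < 2")
    case True
    then show ?thesis by (simp add: alt_step_cayley_hamilton trace_in_coin)
  next
    case False
    with assms show ?thesis by (simp add: alt_step_coins in_coin_def)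
  qed
  also have "\<dots> = alt_pencil \<gamma> (\<lambda>x y. - h x y) (\<lambda>x y. f x y + trace_shift \<gamma> h x y) j x y k"
  proof -
    have "in_coin j (\<lambda>x y. f x y + trace_shift \<gamma> h x y)
        = (\<lambda>x y k. in_coin j f x y k + in_coin j (trace_shift \<gamma> h) x y k)"
      and "in_coin j (\<lambda>x y. - h x y) x y k = - in_coin j h x y k"
      by (auto simp: in_coin_def fun_eq_iff)
    then show ?thesis
      using alt_step_linear[of \<gamma> 1 _ 1] by (simp add: alt_pencil_def)
  qed
  finally show "alt_step \<gamma> (alt_pencil \<gamma> f h j) x y k
    = alt_pencil \<gamma> (\<lambda>x y. - h x y) (\<lambda>x y. f x y + trace_shift \<gamma> h x y) j x y k" .
qed

definition alt_pencil_pair :: "real \<Rightarrow> wavefn \<Rightarrow> wavefn \<Rightarrow> bool" where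
  "alt_pencil_pair \<gamma> u v \<longleftrightarrow> (\<exists>f h. (\<forall>x y. f x y \<in> \<real> \<and> h x y \<in> \<real>)
     \<and> u = alt_pencil \<gamma> f h 0 \<and> v = alt_pencil \<gamma> f h (Suc 0))"

lemma alt_pencil_pair_alt_step:
  assumes "alt_pencil_pair \<gamma> u v"
  shows "alt_pencil_pair \<gamma> (alt_step \<gamma> u) (alt_step \<gamma> v)"
proof -
  obtain f h where real: "\<forall>x y. f x y \<in> \<real> \<and> h x y \<in> \<real>"
    and uv: "u = alt_pencil \<gamma> f h 0" "v = alt_pencil \<gamma> f h (Suc 0)"
    using assms unfolding alt_pencil_pair_def by blast
  have "\<forall>x y. - h x y \<in> \<real> \<and> f x y + trace_shift \<gamma> h x y \<in> \<real>"
    using real by (simp add: trace_shift_def)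
  then show ?thesis
    unfolding alt_pencil_pair_def uv
    by (intro exI[of _ "\<lambda>x y. - h x y"] exI[of _ "\<lambda>x y. f x y + trace_shift \<gamma> h x y"])
      (simp add: alt_step_alt_pencil)
qed

lemma alt_pencil_pair_alt_walk:
  "alt_pencil_pair \<gamma> u v \<Longrightarrow> alt_pencil_pair \<gamma> (alt_walk \<gamma> u t) (alt_walk \<gamma> v t)"
  by (induction t) (simp_all add: alt_walk_def alt_pencil_pair_alt_step)

definition origin_basis :: "nat \<Rightarrow> wavefn" where
  "origin_basis j = at_origin (\<lambda>k. if k = j then 1 else 0)"

lemma alt_pencil_pair_at_origin:
  "alt_pencil_pair \<gamma> (origin_basis 0) (origin_basis (Suc 0))"
proof -
  have "in_coin j (\<lambda>x y. 0) = (\<lambda>x y k. 0)" for j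
    by (simp add: fun_eq_iff in_coin_def)
  then have "alt_step \<gamma> (in_coin j (\<lambda>x y. 0)) x y k = 0" for j x y k
    using alt_step_linear[of \<gamma> 0 _ 0] by simp
  then have "origin_basis j
      = alt_pencil \<gamma> (\<lambda>x y. if x = 0 \<and> y = 0 then 1 else 0) (\<lambda>x y. 0) j" for j
    by (simp add: fun_eq_iff origin_basis_def at_origin_def alt_pencil_def in_coin_def)
  then show ?thesis
    unfolding alt_pencil_pair_def
    by (intro exI[of _ "\<lambda>x y. if x = 0 \<and> y = 0 then 1 else 0"] exI[of _ "\<lambda>x y. 0"]) simp
qed

lemma alt_pencil_pair_real:
  assumes "alt_pencil_pair \<gamma> u v"
  shows "u x y k \<in> \<real>" "v x y k \<in> \<real>"
proof -
  obtain f h where real: "\<forall>x y. f x y \<in> \<real> \<and> h x y \<in> \<real>"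
    and uv: "u = alt_pencil \<gamma> f h 0" "v = alt_pencil \<gamma> f h (Suc 0)"
    using assms unfolding alt_pencil_pair_def by blast
  have "in_coin j g x y k \<in> \<real>" if "\<forall>x y. g x y \<in> \<real>" for j g x y k
    using that by (simp add: in_coin_def)
  with real show "u x y k \<in> \<real>" "v x y k \<in> \<real>"
    unfolding uv alt_pencil_def by (simp_all add: alt_step_real)
qed

(* At every site, the amplitude pairs (u_k, v_k) of the walks started from |0> and |1> are
   reflected by U; k = 0 fills Grover coins 0 and 2 and k = 1 fills coins 1 and 3.  The sign sigma
   of c s absorbs the absolute values in the Grover coin. *)
definition grover_embedding :: "real \<Rightarrow> real \<Rightarrow> wavefn \<Rightarrow> wavefn \<Rightarrow> wavefn" where
  "grover_embedding \<gamma> \<sigma> u v x y i =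
    (if i = 0 then - (of_real (cos \<gamma>) * u x y 0 + of_real (sin \<gamma>) * v x y 0)
     else if i = 1 then of_real \<sigma> * (of_real (cos \<gamma>) * u x y 1 + of_real (sin \<gamma>) * v x y 1)
     else if i = 2 then of_real \<sigma> * (of_real (sin \<gamma>) * u x y 0 - of_real (cos \<gamma>) * v x y 0)
     else if i = 3 then of_real (sin \<gamma>) * u x y 1 - of_real (cos \<gamma>) * v x y 1
     else 0)"

lemma grover_step_grover_embedding:
  assumes sign: "\<bar>cos \<gamma> * sin \<gamma>\<bar> = \<sigma> * (cos \<gamma> * sin \<gamma>)" and "\<sigma> * \<sigma> = 1"
    and "alt_pencil_pair \<gamma> u v"
  shows "grover_step \<gamma> (grover_embedding \<gamma> \<sigma> u v) x y i
    = - grover_embedding \<gamma> \<sigma> (alt_step \<gamma> u) (alt_step \<gamma> v) x y i"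
proof -
  obtain f h where uv: "u = alt_pencil \<gamma> f h 0" "v = alt_pencil \<gamma> f h (Suc 0)"
    using assms(3) unfolding alt_pencil_pair_def by blast
  have step_uv:
    "alt_step \<gamma> u = alt_pencil \<gamma> (\<lambda>x y. - h x y) (\<lambda>x y. f x y + trace_shift \<gamma> h x y) 0"
    "alt_step \<gamma> v = alt_pencil \<gamma> (\<lambda>x y. - h x y) (\<lambda>x y. f x y + trace_shift \<gamma> h x y) (Suc 0)"
    by (simp_all add: uv alt_step_alt_pencil)
  note pyth = of_real_cos_sin_squared_add[of \<gamma>, where 'a = complex]
  have sign_squared: "(of_real \<sigma> :: complex) * of_real \<sigma> = 1"
    by (metis \<open>\<sigma> * \<sigma> = 1\<close> of_real_1 of_real_mult)
  note expand = grover_step_coins sign grover_embedding_def alt_pencil_def alt_step_coins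
    in_coin_def trace_shift_def
  consider "i = 0" | "i = Suc 0" | "i = 2" | "i = 3" | "4 \<le> i" by linarith
  then show ?thesis
  proof cases
    case 1
    show ?thesis
      unfolding step_uv uv by (simp add: 1 expand) (use pyth sign_squared in algebra)
  next
    case 2
    show ?thesis
      unfolding step_uv uv by (simp add: 2 expand) (simp add: algebra_simps power2_eq_square)
  next
    case 3
    show ?thesis
      unfolding step_uv uv by (simp add: 3 expand) (simp add: algebra_simps power2_eq_square)
  next
    case 4
    show ?thesis
      unfolding step_uv uv by (simp add: 4 expand) (use sign_squared in algebra)
  qed (simp add: grover_step_coins grover_embedding_def)
qed

lemma grover_step_cong:
  assumes "\<forall>x y i. i < 4 \<longrightarrow> \<phi> x y i = \<psi> x y i"
  shows "grover_step \<gamma> \<phi> x y i = grover_step \<gamma> \<psi> x y i"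
  using assms by (simp add: grover_step_def)

lemma grover_step_scale:
  "grover_step \<gamma> (\<lambda>x y i. z * \<psi> x y i) x y i = z * grover_step \<gamma> \<psi> x y i"
  by (simp add: grover_step_def sum_distrib_left algebra_simps)

lemma grover_walk_grover_embedding:
  assumes sign: "\<bar>cos \<gamma> * sin \<gamma>\<bar> = \<sigma> * (cos \<gamma> * sin \<gamma>)" and sign_squared: "\<sigma> * \<sigma> = 1"
    and pair: "alt_pencil_pair \<gamma> u v"
    and init: "\<forall>x y i. i < 4 \<longrightarrow> \<psi> x y i = z * grover_embedding \<gamma> \<sigma> u v x y i"
  shows "i < 4 \<Longrightarrow> grover_walk \<gamma> \<psi> t x y i
    = z * (-1)^t * grover_embedding \<gamma> \<sigma> (alt_walk \<gamma> u t) (alt_walk \<gamma> v t) x y i"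
proof (induction t arbitrary: x y i)
  case 0
  then show ?case using init by (simp add: grover_walk_def alt_walk_def)
next
  case (Suc t)
  let ?E = "\<lambda>t. grover_embedding \<gamma> \<sigma> (alt_walk \<gamma> u t) (alt_walk \<gamma> v t)"
  have "grover_walk \<gamma> \<psi> (Suc t) x y i = grover_step \<gamma> (grover_walk \<gamma> \<psi> t) x y i"
    by (simp add: grover_walk_def)
  also have "\<dots> = grover_step \<gamma> (\<lambda>x y i. z * (-1)^t * ?E t x y i) x y i"
    using Suc.IH by (intro grover_step_cong) simp
  also have "\<dots> = z * (-1)^t * grover_step \<gamma> (?E t) x y i"
    by (rule grover_step_scale)
  also have "\<dots> = z * (-1)^Suc t * ?E (Suc t) x y i"
    using grover_step_grover_embedding[OF sign sign_squared alt_pencil_pair_alt_walk[OF pair]]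
    by (simp add: alt_walk_def)
  finally show ?case .
qed

lemma at_origin_eq_grover_embedding:
  assumes "q 0 = z * - of_real (cos \<gamma>)" "q 3 = q 0"
    and "q (Suc 0) = z * (of_real \<sigma> * of_real (sin \<gamma>))" "q 2 = q (Suc 0)"
  shows "\<forall>x y i. i < 4 \<longrightarrow>
    at_origin q x y i = z * grover_embedding \<gamma> \<sigma> (origin_basis 0) (origin_basis (Suc 0)) x y i"
proof (intro allI impI)
  fix x y and i :: nat
  assume "i < 4"
  then consider "i = 0" | "i = Suc 0" | "i = 2" | "i = 3" by linarith
  then show "at_origin q x y i
      = z * grover_embedding \<gamma> \<sigma> (origin_basis 0) (origin_basis (Suc 0)) x y i"
    by cases (simp_all add: assms origin_basis_def at_origin_def grover_embedding_def)
qed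

lemma prob_at_scaled:
  assumes "\<forall>i<d. \<psi> x y i = z * \<phi> x y i"
  shows "prob_at d \<psi> x y = (cmod z)^2 * prob_at d \<phi> x y"
  using assms by (simp add: prob_at_def norm_mult power_mult_distrib sum_distrib_left)

lemma cmod_rotation_squared:
  "(cmod (of_real c * a + of_real s * b))^2 + (cmod (of_real s * a - of_real c * b))^2
     = (c^2 + s^2) * ((cmod a)^2 + (cmod b)^2)"
  unfolding cmod_power2 by (simp add: power2_eq_square algebra_simps)

lemma prob_at_grover_embedding:
  assumes "\<sigma> * \<sigma> = 1"
  shows "prob_at 4 (grover_embedding \<gamma> \<sigma> u v) x y = prob_at 2 u x y + prob_at 2 v x y"
proof -
  have "cmod (of_real \<sigma>) = 1"
    using assms by (auto simp: square_eq_1_iff)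
  then have "prob_at 4 (grover_embedding \<gamma> \<sigma> u v) x y
      = ((cmod (- (of_real (cos \<gamma>) * u x y 0 + of_real (sin \<gamma>) * v x y 0)))^2
         + (cmod (of_real (sin \<gamma>) * u x y 0 - of_real (cos \<gamma>) * v x y 0))^2)
      + ((cmod (of_real (cos \<gamma>) * u x y 1 + of_real (sin \<gamma>) * v x y 1))^2
         + (cmod (of_real (sin \<gamma>) * u x y 1 - of_real (cos \<gamma>) * v x y 1))^2)"
    by (simp add: prob_at_def grover_embedding_def lessThan_nat_numeral norm_mult)
  also have "\<dots> = prob_at 2 u x y + prob_at 2 v x y"
    unfolding norm_minus_cancel
    by (simp add: cmod_rotation_squared prob_at_def lessThan_nat_numeral)
  finally show ?thesis .
qed

lemma cmod_real_combination_squared: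
  assumes "(cmod \<nu>0)^2 = 1/2" "(cmod \<nu>1)^2 = 1/2" "Re (\<nu>0 * cnj \<nu>1) = 0"
  shows "(cmod (\<nu>0 * of_real a + \<nu>1 * of_real b))^2 = (a^2 + b^2) / 2"
proof -
  have "(cmod (\<nu>0 * of_real a + \<nu>1 * of_real b))^2
      = (cmod \<nu>0)^2 * a^2 + (cmod \<nu>1)^2 * b^2 + 2 * Re (\<nu>0 * cnj \<nu>1) * a * b"
    unfolding cmod_power2 by (simp add: power2_eq_square algebra_simps)
  also have "\<dots> = (a^2 + b^2) / 2"
    unfolding assms by simp
  finally show ?thesis .
qed

lemma prob_at_alt_superposition:
  assumes "(cmod \<nu>0)^2 = 1/2" "(cmod \<nu>1)^2 = 1/2" "Re (\<nu>0 * cnj \<nu>1) = 0"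
    and sup: "\<forall>x y k. k < 2 \<longrightarrow> \<psi> x y k = \<nu>0 * u x y k + \<nu>1 * v x y k"
    and real: "\<forall>x y k. u x y k \<in> \<real> \<and> v x y k \<in> \<real>"
  shows "prob_at 2 \<psi> x y = (prob_at 2 u x y + prob_at 2 v x y) / 2"
proof -
  have pointwise: "(cmod (\<psi> x y k))^2 = ((cmod (u x y k))^2 + (cmod (v x y k))^2) / 2"
    if "k < 2" for k
  proof -
    obtain a b where "u x y k = of_real a" "v x y k = of_real b"
      using real by (meson Reals_cases)
    then show ?thesis
      using cmod_real_combination_squared[OF assms(1-3)] sup that by simp
  qed
  have "prob_at 2 \<psi> x y = (\<Sum>k<2. ((cmod (u x y k))^2 + (cmod (v x y k))^2) / 2)"
    unfolding prob_at_def by (rule sum.cong) (simp_all add: pointwise)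
  also have "\<dots> = (prob_at 2 u x y + prob_at 2 v x y) / 2"
    by (simp add: prob_at_def sum.distrib flip: sum_divide_distrib)
  finally show ?thesis .
qed

lemma prob_at_alt_walk_origin:
  assumes "(cmod \<nu>0)^2 + (cmod \<nu>1)^2 = 1" "(cmod \<nu>0)^2 = (cmod \<nu>1)^2"
    and "\<nu>0 * cnj \<nu>1 + cnj \<nu>0 * \<nu>1 = 0"
  shows "prob_at 2 (alt_walk \<gamma> (at_origin (\<lambda>k. if k = 0 then \<nu>0 else \<nu>1)) t) x y
    = (prob_at 2 (alt_walk \<gamma> (origin_basis 0) t) x y
       + prob_at 2 (alt_walk \<gamma> (origin_basis (Suc 0)) t) x y) / 2"
proof -
  have norms: "(cmod \<nu>0)^2 = 1/2" "(cmod \<nu>1)^2 = 1/2"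
    using assms(1,2) by simp_all
  have orth: "Re (\<nu>0 * cnj \<nu>1) = 0"
    using arg_cong[where f = Re, OF assms(3)] by simp
  have "\<forall>x y k. k < 2 \<longrightarrow> at_origin (\<lambda>k. if k = 0 then \<nu>0 else \<nu>1) x y k
      = \<nu>0 * origin_basis 0 x y k + \<nu>1 * origin_basis (Suc 0) x y k"
    by (auto simp: origin_basis_def at_origin_def less_2_cases_iff)
  then show ?thesis
    using alt_pencil_pair_real[OF alt_pencil_pair_alt_walk[OF alt_pencil_pair_at_origin]]
      alt_walk_superposition
    by (intro prob_at_alt_superposition[OF norms orth]) simp_all
qed

lemma prob_at_grover_walk_origin:
  assumes "sin \<gamma> \<noteq> 0"
    and "q 0 = complex_of_real ((-1)^\<xi> * \<bar>cos \<gamma> * sin \<gamma>\<bar> / (sqrt 2 * sin \<gamma>))" "q 3 = q 0"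
    and "q 1 = complex_of_real (- ((-1)^\<xi> * sin \<gamma> / sqrt 2))" "q 2 = q 1"
  shows "prob_at 4 (grover_walk \<gamma> (at_origin q) t) x y
    = (prob_at 2 (alt_walk \<gamma> (origin_basis 0) t) x y
       + prob_at 2 (alt_walk \<gamma> (origin_basis (Suc 0)) t) x y) / 2"
proof -
  define \<sigma> :: real where "\<sigma> = (if 0 \<le> cos \<gamma> * sin \<gamma> then 1 else -1)"
  define \<rho> :: real where "\<rho> = - ((-1)^\<xi> * \<sigma>)"
  have sign: "\<bar>cos \<gamma> * sin \<gamma>\<bar> = \<sigma> * (cos \<gamma> * sin \<gamma>)" and sign_squared: "\<sigma> * \<sigma> = 1"
    by (simp_all add: \<sigma>_def)
  have scale: "(cmod (of_real (\<rho> / sqrt 2) * (-1)^t))^2 = 1/2"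
    by (simp add: \<rho>_def \<sigma>_def norm_mult norm_power norm_divide power_divide abs_mult)
  have "(-1)^\<xi> * \<bar>cos \<gamma> * sin \<gamma>\<bar> / (sqrt 2 * sin \<gamma>) = \<rho> / sqrt 2 * - cos \<gamma>"
    and "- ((-1)^\<xi> * sin \<gamma> / sqrt 2) = \<rho> / sqrt 2 * (\<sigma> * sin \<gamma>)"
    using assms(1) sign_squared unfolding sign \<rho>_def by (simp_all add: field_simps)
  then have init: "\<forall>x y i. i < 4 \<longrightarrow> at_origin q x y i
      = of_real (\<rho> / sqrt 2) * grover_embedding \<gamma> \<sigma> (origin_basis 0) (origin_basis (Suc 0)) x y i"
    using assms(2-5) by (intro at_origin_eq_grover_embedding) simp_all
  have "prob_at 4 (grover_walk \<gamma> (at_origin q) t) x y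
      = (cmod (of_real (\<rho> / sqrt 2) * (-1)^t))^2 * prob_at 4 (grover_embedding \<gamma> \<sigma>
          (alt_walk \<gamma> (origin_basis 0) t) (alt_walk \<gamma> (origin_basis (Suc 0)) t)) x y"
    using grover_walk_grover_embedding[OF sign sign_squared alt_pencil_pair_at_origin init]
    by (intro prob_at_scaled) simp
  then show ?thesis
    unfolding scale prob_at_grover_embedding[OF sign_squared] by simp
qed

theorem theorem2:
  fixes \<gamma> :: real and \<nu>0 \<nu>1 :: complex and \<xi> :: nat and q :: "nat \<Rightarrow> complex"
  assumes "0 < \<gamma>" "\<gamma> < 2 * pi"
    and "\<gamma> \<noteq> pi / 2" "\<gamma> \<noteq> pi" "\<gamma> \<noteq> 3 * pi / 2"
    and "(cmod \<nu>0)^2 + (cmod \<nu>1)^2 = 1"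
    and "(cmod \<nu>0)^2 = (cmod \<nu>1)^2"
    and "\<nu>0 * cnj \<nu>1 + cnj \<nu>0 * \<nu>1 = 0"
    and "\<xi> \<in> {0, 1}"
    and "q 0 = complex_of_real ((-1)^\<xi> * \<bar>cos \<gamma> * sin \<gamma>\<bar> / (sqrt 2 * sin \<gamma>))"
    and "q 3 = q 0"
    and "q 1 = complex_of_real (- ((-1)^\<xi> * sin \<gamma> / sqrt 2))"
    and "q 2 = q 1"
  shows "\<forall>t x y.
    prob_at 2 (alt_walk \<gamma> (at_origin (\<lambda>k. if k = 0 then \<nu>0 else \<nu>1)) t) x y
    = prob_at 4 (grover_walk \<gamma> (at_origin q) t) x y"
proof (intro allI)
  fix t x y
  have sin_nonzero: "sin \<gamma> \<noteq> 0"
    using assms(1,2,4) sin_gt_zero[of \<gamma>] sin_lt_zero[of \<gamma>] by fastforce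
  show "prob_at 2 (alt_walk \<gamma> (at_origin (\<lambda>k. if k = 0 then \<nu>0 else \<nu>1)) t) x y
    = prob_at 4 (grover_walk \<gamma> (at_origin q) t) x y"
    by (simp only: prob_at_alt_walk_origin[OF assms(6-8)]
        prob_at_grover_walk_origin[OF sin_nonzero assms(10-13)])
qed

end
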